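(* Let $X$ be a fake weighted projective space with weights $(\lambda_0,\lambda_1,\ldots,\lambda_n)$ and associated $n$-simplex $P$, and suppose $X$ has at worst canonical singularities. Then $$\mathrm{mult}\,P\leq\frac{h^{n-1}}{\lambda_1\lambda_2\cdots\lambda_n},\qquad\text{where }h:=\sum_{i=0}^n\lambda_i.$$
   Context: Let $N\cong\mathbb{Z}^n$ be a lattice and $N_\mathbb{R}:=N\otimes_\mathbb{Z}\mathbb{R}$. Let $\rho_0,\ldots,\rho_n\in N$ be primitive lattice points with $N_\mathbb{R}=\sum_{i=0}^n\mathbb{R}_{\geq0}\rho_i$. There are positive integers $\lambda_0,\ldots,\lambda_n$ with $\gcd\{\lambda_0,\ldots,\lambda_n\}=1$ such that $\sum_{i=0}^n\lambda_i\rho_i=0$. The cones $\sigma_i$ generated by $\{\rho_j: j\neq i\}$ generate a complete simplicial fan; the associated projective toric variety $X$ is called a fake weighted projective space with weights $(\lambda_0,\ldots,\lambda_n)$ (indexed consistently with the $\rho_i$), and $P:=\mathrm{conv}\{\rho_0,\ldots,\rho_n\}$ is its associated simplex. The multiplicity is $\mathrm{mult}\,P:=[N:\mathbb{Z}\rho_0+\cdots+\mathbb{Z}\rho_n]$. *)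

theory Defs
  imports "HOL-Analysis.Analysis"
begin

text \<open>The lattice N is modelled as int^'n (so n = CARD('n)), and N_R as real^'n.\<close>

definition to_real_vec :: "int ^ 'n \<Rightarrow> real ^ 'n" where
  "to_real_vec v = (\<chi> j. real_of_int (v $ j))"

definition primitive_lattice_point :: "int ^ 'n \<Rightarrow> bool" where
  "primitive_lattice_point v \<longleftrightarrow>
     (\<forall>(k::int) w. v = k *s w \<longrightarrow> k = 1 \<or> k = -1)"

definition gen_sublattice :: "(nat \<Rightarrow> int ^ 'n) \<Rightarrow> nat \<Rightarrow> (int ^ 'n) set" where
  "gen_sublattice \<rho> m = {\<Sum>i\<in>{0..m}. c i *s \<rho> i | c. True}"

definition lattice_index :: "(int ^ 'n) set \<Rightarrow> nat" where
  "lattice_index L = card ((\<lambda>v. (\<lambda>l. v + l) ` L) ` (UNIV :: (int ^ 'n) set))"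

definition mult_simplex :: "(nat \<Rightarrow> int ^ 'n) \<Rightarrow> nat" where
  "mult_simplex \<rho> = lattice_index (gen_sublattice \<rho> CARD('n))"

definition assoc_simplex :: "(nat \<Rightarrow> int ^ 'n) \<Rightarrow> (real ^ 'n) set" where
  "assoc_simplex \<rho> = convex hull ((\<lambda>i. to_real_vec (\<rho> i)) ` {0..CARD('n)})"

definition fake_wps_data :: "(nat \<Rightarrow> int ^ 'n) \<Rightarrow> (nat \<Rightarrow> nat) \<Rightarrow> bool" where
  "fake_wps_data \<rho> wt \<longleftrightarrow>
     (\<forall>i\<in>{0..CARD('n)}. primitive_lattice_point (\<rho> i)) \<and>
     (\<forall>x::real ^ 'n. \<exists>c. (\<forall>i. c i \<ge> 0) \<and>
         x = (\<Sum>i\<in>{0..CARD('n)}. c i *\<^sub>R to_real_vec (\<rho> i))) \<and>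
     (\<forall>i\<in>{0..CARD('n)}. wt i > 0) \<and>
     Gcd (wt ` {0..CARD('n)}) = 1 \<and>
     (\<Sum>i\<in>{0..CARD('n)}. int (wt i) *s \<rho> i) = 0"

text \<open>X has at worst canonical singularities iff the origin is the only lattice point
  in the interior of P.\<close>
definition canonical_simplex :: "(nat \<Rightarrow> int ^ 'n) \<Rightarrow> bool" where
  "canonical_simplex \<rho> \<longleftrightarrow>
     (\<forall>v::int ^ 'n. to_real_vec v \<in> interior (assoc_simplex \<rho>) \<longrightarrow> v = 0)"

end

theory Submission
  imports Defs
begin

text \<open>
  Let L be the sublattice generated by the rays, of index m, choose E > 0 with E N \<subseteq> L
  (e.g. E = m!), and put h = \<Sum> \<lambda>_i and D = h E. Every x \<in> N satisfies D x = \<Sum> u_i \<rho>_i with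
  integers u_i whose sum is any prescribed multiple j D of D. Encode a coset x + L, a level
  0 \<le> j < h and a vector b with 0 \<le> b_i < E \<lambda>_i (1 \<le> i \<le> n) by the residues of u_i + b_i
  modulo D, i = 1..n. If two codes coincide, their difference gives a lattice point y with
  D y = \<Sum> w_i \<rho>_i, \<Sum> w_i = 0 and |w_i| < E \<lambda>_i for i \<ge> 1. Up to a sign, the numbers
  (E \<lambda>_i + w_i) / D are positive barycentric coordinates of y, so y is an interior lattice
  point of P and hence 0; affine independence of the rays then forces w = 0, and the
  coprimality of the weights forces equal levels. The code is therefore injective, whence
  m h (E \<lambda>_1) \<cdots> (E \<lambda>_n) \<le> D^n, i.e. m \<lambda>_1 \<cdots> \<lambda>_n \<le> h^(n-1).
\<close>

lemma to_real_vec_add: "to_real_vec (a + b) = to_real_vec a + to_real_vec b"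
  by (simp add: to_real_vec_def vec_eq_iff)

lemma to_real_vec_smult: "to_real_vec (c *s a) = real_of_int c *\<^sub>R to_real_vec a"
  by (simp add: to_real_vec_def vec_eq_iff)

lemma to_real_vec_zero [simp]: "to_real_vec 0 = 0"
  by (simp add: to_real_vec_def vec_eq_iff)

lemma to_real_vec_sum: "to_real_vec (\<Sum>i\<in>S. f i) = (\<Sum>i\<in>S. to_real_vec (f i))"
  by (induction S rule: infinite_finite_induct) (auto simp: to_real_vec_add)

lemma to_real_vec_lincomb:
  "to_real_vec (\<Sum>i\<in>S. c i *s v i) = (\<Sum>i\<in>S. real_of_int (c i) *\<^sub>R to_real_vec (v i))"
  by (simp add: to_real_vec_sum to_real_vec_smult)

lemma sum_smult_add_distrib:
  "(\<Sum>i\<in>S. (a i + b i) *s v i) = (\<Sum>i\<in>S. a i *s v i) + (\<Sum>i\<in>S. (b i :: int) *s v i)"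
  by (simp add: vector_sadd_rdistrib sum.distrib)

lemma sum_smult_diff_distrib:
  "(\<Sum>i\<in>S. (a i - b i) *s v i) = (\<Sum>i\<in>S. a i *s v i) - (\<Sum>i\<in>S. (b i :: int) *s v i)"
  by (simp add: vector_sub_rdistrib sum_subtractf)

lemma sum_smult_cmult:
  "(\<Sum>i\<in>S. (c * a i) *s v i) = (c :: int) *s (\<Sum>i\<in>S. a i *s v i)"
  by (simp add: sum_cmul[symmetric] vector_smult_assoc)

lemma sum_inv_into_image:
  assumes "inj_on f I"
  shows "(\<Sum>v\<in>f ` I. g (inv_into I f v) v) = (\<Sum>i\<in>I. g i (f i))"
  using assms by (simp add: sum.reindex)

lemma dvd_if_Gcd_eq_1:
  fixes k d :: nat
  assumes "Gcd (f ` A) = 1" and "\<And>a. a \<in> A \<Longrightarrow> k dvd d * f a"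
  shows "k dvd d"
proof -
  have "k dvd Gcd ((*) d ` f ` A)"
    using assms(2) by (auto simp: dvd_Gcd_iff)
  then show ?thesis
    using assms(1) by (simp add: Gcd_mult)
qed

lemma dvd_first_plus_residues:
  fixes a c :: "nat \<Rightarrow> int"
  assumes "D dvd (\<Sum>i\<in>{0..n}. a i)" and "\<And>i. i \<in> {1..n} \<Longrightarrow> D dvd a i - c i"
  shows "D dvd a 0 + (\<Sum>i\<in>{1..n}. c i)"
proof -
  have "a 0 + (\<Sum>i\<in>{1..n}. c i) = (\<Sum>i\<in>{0..n}. a i) - (\<Sum>i\<in>{1..n}. a i - c i)"
    by (simp add: sum.atLeast_Suc_atMost sum_subtractf)
  moreover have "D dvd (\<Sum>i\<in>{1..n}. a i - c i)"
    by (rule dvd_sum) (rule assms(2))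
  ultimately show ?thesis
    using assms(1) by (simp add: dvd_diff)
qed

lemma gen_sublattice_lincomb_mem: "(\<Sum>i\<in>{0..m}. c i *s \<rho> i) \<in> gen_sublattice \<rho> m"
  unfolding gen_sublattice_def by blast

lemma gen_sublattice_memE:
  assumes "x \<in> gen_sublattice \<rho> m"
  obtains c where "x = (\<Sum>i\<in>{0..m}. c i *s \<rho> i)"
  using assms unfolding gen_sublattice_def by blast

lemma gen_sublattice_add:
  assumes "x \<in> gen_sublattice \<rho> m" "y \<in> gen_sublattice \<rho> m"
  shows "x + y \<in> gen_sublattice \<rho> m"
proof -
  obtain c d where "x = (\<Sum>i\<in>{0..m}. c i *s \<rho> i)" "y = (\<Sum>i\<in>{0..m}. d i *s \<rho> i)"
    using assms by (metis gen_sublattice_memE)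
  then have "x + y = (\<Sum>i\<in>{0..m}. (c i + d i) *s \<rho> i)"
    unfolding sum_smult_add_distrib by simp
  then show ?thesis
    by (metis gen_sublattice_lincomb_mem)
qed

lemma gen_sublattice_smult:
  assumes "x \<in> gen_sublattice \<rho> m"
  shows "k *s x \<in> gen_sublattice \<rho> m"
proof -
  obtain c where "x = (\<Sum>i\<in>{0..m}. c i *s \<rho> i)"
    using assms by (rule gen_sublattice_memE)
  then have "k *s x = (\<Sum>i\<in>{0..m}. (k * c i) *s \<rho> i)"
    by (simp add: sum_smult_cmult)
  then show ?thesis
    by (metis gen_sublattice_lincomb_mem)
qed

definition lattice_coset :: "(int ^ 'n) set \<Rightarrow> int ^ 'n \<Rightarrow> (int ^ 'n) set" where
  "lattice_coset L v = (+) v ` L"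

lemma lattice_index_eq_card_cosets: "lattice_index L = card (range (lattice_coset L))"
  unfolding lattice_index_def lattice_coset_def by simp

lemma gen_sublattice_coset_eq_iff:
  "lattice_coset (gen_sublattice \<rho> m) x = lattice_coset (gen_sublattice \<rho> m) y
     \<longleftrightarrow> x - y \<in> gen_sublattice \<rho> m"
  (is "?C x = ?C y \<longleftrightarrow> _")
proof
  have zero: "0 \<in> gen_sublattice \<rho> m"
    using gen_sublattice_lincomb_mem[of "\<lambda>_. 0" \<rho> m] by simp
  assume "?C x = ?C y"
  then have "x \<in> ?C y"
    using zero unfolding lattice_coset_def by (metis add.right_neutral image_eqI)
  then show "x - y \<in> gen_sublattice \<rho> m"
    unfolding lattice_coset_def by auto
next
  have "?C x \<subseteq> ?C y" if "x - y \<in> gen_sublattice \<rho> m" for x y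
  proof
    fix z assume "z \<in> ?C x"
    then obtain l where l: "l \<in> gen_sublattice \<rho> m" "z = x + l"
      unfolding lattice_coset_def by auto
    have "(x - y) + l \<in> gen_sublattice \<rho> m"
      using that l(1) by (rule gen_sublattice_add)
    moreover have "z = y + ((x - y) + l)"
      using l(2) by simp
    ultimately show "z \<in> ?C y"
      unfolding lattice_coset_def by blast
  qed
  moreover assume "x - y \<in> gen_sublattice \<rho> m"
  moreover have "y - x \<in> gen_sublattice \<rho> m"
    using gen_sublattice_smult[OF \<open>x - y \<in> _\<close>, of "-1"]
    by (metis minus_diff_eq vector_sneg_minus1)
  ultimately show "?C x = ?C y"
    by blast
qed

lemma fact_index_smult_mem_gen_sublattice:
  assumes "lattice_index (gen_sublattice \<rho> m) > 0"
  shows "int (fact (lattice_index (gen_sublattice \<rho> m))) *s x \<in> gen_sublattice \<rho> m"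
proof -
  let ?L = "gen_sublattice \<rho> m" and ?M = "lattice_index (gen_sublattice \<rho> m)"
  let ?f = "\<lambda>k::nat. lattice_coset ?L (int k *s x)"
  have "finite (range (lattice_coset ?L))"
    using assms unfolding lattice_index_eq_card_cosets by (simp add: card_gt_0_iff)
  moreover have "?f ` {0..?M} \<subseteq> range (lattice_coset ?L)"
    by auto
  ultimately have "\<not> inj_on ?f {0..?M}"
    using card_inj_on_le[of ?f "{0..?M}" "range (lattice_coset ?L)"]
    unfolding lattice_index_eq_card_cosets by fastforce
  then obtain i j where "i \<le> ?M" "j \<le> ?M" "i \<noteq> j" "?f i = ?f j"
    unfolding inj_on_def by auto
  then obtain i j where ij: "i < j" "j \<le> ?M" "?f j = ?f i"
    by (metis linorder_neqE_nat)
  then have "int j *s x - int i *s x \<in> ?L"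
    by (simp add: gen_sublattice_coset_eq_iff)
  then have diff: "int (j - i) *s x \<in> ?L"
    using ij(1) by (simp add: of_nat_diff vector_sub_rdistrib)
  have "j - i dvd fact ?M"
    using ij by (intro dvd_fact) auto
  then obtain q where "fact ?M = (j - i) * q" ..
  then have "int (fact ?M) *s x = int q *s (int (j - i) *s x)"
    by (simp add: vector_smult_assoc mult.commute)
  then show ?thesis
    using gen_sublattice_smult[OF diff] by simp
qed

locale fake_wps =
  fixes \<rho> :: "nat \<Rightarrow> int ^ 'n" and wt :: "nat \<Rightarrow> nat" and h :: nat
  assumes fake_wps_data: "fake_wps_data \<rho> wt"
    and h_def: "h = (\<Sum>i\<in>{0..CARD('n)}. wt i)"
begin

abbreviation ray :: "nat \<Rightarrow> real ^ 'n" where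
  "ray i \<equiv> to_real_vec (\<rho> i)"

lemma weighted_relation: "(\<Sum>i\<in>{0..CARD('n)}. int (wt i) *s \<rho> i) = 0"
  using fake_wps_data unfolding fake_wps_data_def by blast

lemma weighted_relation_real: "(\<Sum>i\<in>{0..CARD('n)}. real (wt i) *\<^sub>R ray i) = 0"
  using arg_cong[OF weighted_relation, of to_real_vec] by (simp add: to_real_vec_lincomb)

lemma wt_pos: "i \<in> {0..CARD('n)} \<Longrightarrow> wt i > 0"
  using fake_wps_data unfolding fake_wps_data_def by blast

lemma Gcd_wt: "Gcd (wt ` {0..CARD('n)}) = 1"
  using fake_wps_data unfolding fake_wps_data_def by blast

lemma h_pos: "h > 0"
  using wt_pos[of 0] unfolding h_def by (simp add: sum.atLeast_Suc_atMost)

lemma sum_wt_real: "(\<Sum>i\<in>{0..CARD('n)}. real (wt i)) = real h"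
  by (simp add: h_def)

lemma span_rays: "span (ray ` {0..CARD('n)}) = UNIV"
proof -
  have "x \<in> span (ray ` {0..CARD('n)})" for x
  proof -
    obtain c where "x = (\<Sum>i\<in>{0..CARD('n)}. c i *\<^sub>R ray i)"
      using fake_wps_data unfolding fake_wps_data_def by blast
    then show ?thesis
      by (metis (no_types, lifting) span_sum span_scale span_base image_eqI)
  qed
  then show ?thesis
    by auto
qed

lemma zero_in_convex_hull_rays: "0 \<in> convex hull (ray ` {0..CARD('n)})"
proof -
  have "(\<Sum>i\<in>{0..CARD('n)}. (real (wt i) / h) *\<^sub>R ray i) \<in> convex hull (ray ` {0..CARD('n)})"
    using h_pos
    by (intro convex_sum) (auto simp: sum_wt_real sum_divide_distrib[symmetric] intro: hull_inc)
  moreover have "(\<Sum>i\<in>{0..CARD('n)}. (real (wt i) / h) *\<^sub>R ray i)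
      = (1 / h) *\<^sub>R (\<Sum>i\<in>{0..CARD('n)}. real (wt i) *\<^sub>R ray i)"
    by (simp add: scaleR_sum_right)
  ultimately show ?thesis
    using weighted_relation_real by simp
qed

lemma aff_dim_rays: "aff_dim (ray ` {0..CARD('n)}) = int CARD('n)"
proof -
  have "affine hull (ray ` {0..CARD('n)}) = UNIV"
    using affine_hull_span_0 zero_in_convex_hull_rays convex_hull_subset_affine_hull span_rays
    by blast
  then show ?thesis
    by (metis aff_dim_affine_hull aff_dim_UNIV DIM_cart DIM_real mult.right_neutral)
qed

lemma card_rays: "card (ray ` {0..CARD('n)}) = Suc CARD('n)"
proof -
  have "aff_dim (ray ` {0..CARD('n)}) \<le> int (card (ray ` {0..CARD('n)})) - 1"
    by (rule aff_dim_le_card) simp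
  moreover have "card (ray ` {0..CARD('n)}) \<le> card {0..CARD('n)}"
    by (rule card_image_le) simp
  ultimately show ?thesis
    using aff_dim_rays by simp
qed

lemma inj_on_rays: "inj_on ray {0..CARD('n)}"
  using card_rays by (simp add: eq_card_imp_inj_on)

lemma rays_affine_independent: "\<not> affine_dependent (ray ` {0..CARD('n)})"
  using aff_dim_rays card_rays by (simp add: affine_independent_iff_card)

lemma affine_relation_rays_trivial:
  assumes "(\<Sum>i\<in>{0..CARD('n)}. \<mu> i) = 0" and "(\<Sum>i\<in>{0..CARD('n)}. \<mu> i *\<^sub>R ray i) = 0"
    and "i \<in> {0..CARD('n)}"
  shows "\<mu> i = 0"
proof -
  define U where "U v = \<mu> (inv_into {0..CARD('n)} ray v)" for v
  have "sum U (ray ` {0..CARD('n)}) = 0" "(\<Sum>v\<in>ray ` {0..CARD('n)}. U v *\<^sub>R v) = 0"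
    using assms(1,2) sum_inv_into_image[OF inj_on_rays, of "\<lambda>i v. \<mu> i"]
      sum_inv_into_image[OF inj_on_rays, of "\<lambda>i v. \<mu> i *\<^sub>R v"]
    unfolding U_def by simp_all
  then have "\<forall>v\<in>ray ` {0..CARD('n)}. U v = 0"
    using rays_affine_independent affine_dependent_explicit_finite[of "ray ` {0..CARD('n)}"]
    by auto
  then show ?thesis
    using assms(3) inv_into_f_f[OF inj_on_rays] unfolding U_def by force
qed

lemma relation_rays_proportional:
  assumes "(\<Sum>i\<in>{0..CARD('n)}. c i *\<^sub>R ray i) = 0" and "i \<in> {0..CARD('n)}"
  shows "c i = (\<Sum>l\<in>{0..CARD('n)}. c l) / h * wt i"
proof -
  define t where "t = (\<Sum>l\<in>{0..CARD('n)}. c l) / h"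
  have "(\<Sum>l\<in>{0..CARD('n)}. t * wt l) = t * h"
    by (simp add: sum_distrib_left[symmetric] sum_wt_real)
  then have "(\<Sum>l\<in>{0..CARD('n)}. c l - t * wt l) = 0"
    using h_pos by (simp add: t_def sum_subtractf)
  moreover have "(\<Sum>l\<in>{0..CARD('n)}. (t * wt l) *\<^sub>R ray l)
      = t *\<^sub>R (\<Sum>l\<in>{0..CARD('n)}. real (wt l) *\<^sub>R ray l)"
    by (simp add: scaleR_sum_right)
  then have "(\<Sum>l\<in>{0..CARD('n)}. (t * wt l) *\<^sub>R ray l) = 0"
    using weighted_relation_real by simp
  then have "(\<Sum>l\<in>{0..CARD('n)}. (c l - t * wt l) *\<^sub>R ray l) = 0"
    using assms(1) by (simp add: scaleR_diff_left sum_subtractf)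
  ultimately have "c i - t * wt i = 0"
    using affine_relation_rays_trivial[of "\<lambda>l. c l - t * wt l"] assms(2) by blast
  then show ?thesis
    by (simp add: t_def)
qed

lemma barycentric_mem_interior:
  assumes "\<And>i. i \<in> {0..CARD('n)} \<Longrightarrow> \<alpha> i > 0" and "(\<Sum>i\<in>{0..CARD('n)}. \<alpha> i) = 1"
  shows "(\<Sum>i\<in>{0..CARD('n)}. \<alpha> i *\<^sub>R ray i) \<in> interior (assoc_simplex \<rho>)"
proof -
  define U where "U v = \<alpha> (inv_into {0..CARD('n)} ray v)" for v
  have "sum U (ray ` {0..CARD('n)}) = 1"
    "(\<Sum>v\<in>ray ` {0..CARD('n)}. U v *\<^sub>R v) = (\<Sum>i\<in>{0..CARD('n)}. \<alpha> i *\<^sub>R ray i)"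
    using assms(2) sum_inv_into_image[OF inj_on_rays, of "\<lambda>i v. \<alpha> i"]
      sum_inv_into_image[OF inj_on_rays, of "\<lambda>i v. \<alpha> i *\<^sub>R v"]
    unfolding U_def by simp_all
  moreover have "\<forall>v\<in>ray ` {0..CARD('n)}. U v > 0"
    using assms(1) inv_into_f_f[OF inj_on_rays] unfolding U_def by auto
  moreover have "\<not> card (ray ` {0..CARD('n)}) \<le> DIM(real ^ 'n)"
    using card_rays by simp
  ultimately show ?thesis
    unfolding assoc_simplex_def
    using interior_convex_hull_explicit_minimal[OF rays_affine_independent] by auto
qed

lemma interior_if_positive_coefficients:
  fixes D :: int
  assumes "D > 0"
    and rel: "D *s y = (\<Sum>i\<in>{0..CARD('n)}. v i *s \<rho> i)"
    and pos: "\<And>i. i \<in> {0..CARD('n)} \<Longrightarrow> v i > 0"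
    and sum_eq: "(\<Sum>i\<in>{0..CARD('n)}. v i) = D"
  shows "to_real_vec y \<in> interior (assoc_simplex \<rho>)"
proof -
  define \<alpha> where "\<alpha> i = real_of_int (v i) / real_of_int D" for i
  have "\<alpha> i > 0" if "i \<in> {0..CARD('n)}" for i
    using pos[OF that] assms(1) unfolding \<alpha>_def by simp
  moreover have "(\<Sum>i\<in>{0..CARD('n)}. \<alpha> i) = 1"
    using sum_eq assms(1) unfolding \<alpha>_def by (simp add: sum_divide_distrib[symmetric] flip: of_int_sum)
  moreover have "(\<Sum>i\<in>{0..CARD('n)}. \<alpha> i *\<^sub>R ray i) = to_real_vec y"
  proof -
    have scaled: "real_of_int D *\<^sub>R to_real_vec y = (\<Sum>i\<in>{0..CARD('n)}. real_of_int (v i) *\<^sub>R ray i)"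
      using arg_cong[OF rel, of to_real_vec] by (simp only: to_real_vec_lincomb to_real_vec_smult)
    have "(\<Sum>i\<in>{0..CARD('n)}. \<alpha> i *\<^sub>R ray i)
        = (1 / real_of_int D) *\<^sub>R (\<Sum>i\<in>{0..CARD('n)}. real_of_int (v i) *\<^sub>R ray i)"
      unfolding \<alpha>_def scaleR_sum_right by (simp add: divide_inverse mult.commute)
    then show ?thesis
      using assms(1) by (simp flip: scaled)
  qed
  ultimately show ?thesis
    using barycentric_mem_interior by metis
qed

lemma scaled_coordinates_exist:
  assumes "int E *s x \<in> gen_sublattice \<rho> CARD('n)"
  shows "\<exists>u. int (h * E) *s x = (\<Sum>i\<in>{0..CARD('n)}. u i *s \<rho> i)
             \<and> (\<Sum>i\<in>{0..CARD('n)}. u i) = j * int (h * E)"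
proof -
  obtain k where k: "int E *s x = (\<Sum>i\<in>{0..CARD('n)}. k i *s \<rho> i)"
    using assms by (rule gen_sublattice_memE)
  define c where "c = j * int E - (\<Sum>l\<in>{0..CARD('n)}. k l)"
  define u where "u i = int h * k i + c * int (wt i)" for i
  \<comment> \<open>adding multiples of the weighted relation adjusts the coefficient sum without moving the point\<close>
  have "(\<Sum>i\<in>{0..CARD('n)}. u i *s \<rho> i)
      = int h *s (\<Sum>i\<in>{0..CARD('n)}. k i *s \<rho> i) + c *s (\<Sum>i\<in>{0..CARD('n)}. int (wt i) *s \<rho> i)"
    unfolding u_def sum_smult_add_distrib sum_smult_cmult ..
  also have "\<dots> = int (h * E) *s x"
    using k[symmetric] weighted_relation by (simp add: vector_smult_assoc)
  finally have "int (h * E) *s x = (\<Sum>i\<in>{0..CARD('n)}. u i *s \<rho> i)" ..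
  moreover have "(\<Sum>i\<in>{0..CARD('n)}. int (wt i)) = int h"
    by (simp add: h_def)
  then have "(\<Sum>i\<in>{0..CARD('n)}. u i) = int h * (\<Sum>l\<in>{0..CARD('n)}. k l) + c * int h"
    by (simp add: u_def sum.distrib sum_distrib_left[symmetric] sum_distrib_right[symmetric])
  then have "(\<Sum>i\<in>{0..CARD('n)}. u i) = j * int (h * E)"
    by (simp add: c_def algebra_simps)
  ultimately show ?thesis
    by blast
qed

lemma eq_if_weighted_difference_dvd:
  assumes "j < h" "j' < h"
    and "\<And>i. i \<in> {0..CARD('n)} \<Longrightarrow> int h dvd (int j - int j') * int (wt i)"
  shows "j = j'"
proof -
  define d where "d = nat \<bar>int j - int j'\<bar>"
  have "h dvd d * wt i" if "i \<in> {0..CARD('n)}" for i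
  proof -
    have "int (d * wt i) = \<bar>(int j - int j') * int (wt i)\<bar>"
      by (simp add: d_def abs_mult)
    then have "int h dvd int (d * wt i)"
      using assms(3)[OF that] by simp
    then show ?thesis
      by (simp only: of_nat_dvd_iff)
  qed
  then have "h dvd d"
    by (rule dvd_if_Gcd_eq_1[OF Gcd_wt])
  moreover have "d < h"
    using assms(1,2) unfolding d_def by auto
  ultimately have "d = 0"
    by (meson dvd_imp_le leD neq0_conv)
  then show ?thesis
    unfolding d_def by simp
qed

lemma relation_eq_multiple_of_weights:
  assumes "(\<Sum>i\<in>{0..CARD('n)}. a i *s \<rho> i) = 0"
    and "(\<Sum>i\<in>{0..CARD('n)}. a i) = int h * t"
    and "i \<in> {0..CARD('n)}"
  shows "a i = t * int (wt i)"
proof -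
  have "(\<Sum>i\<in>{0..CARD('n)}. real_of_int (a i) *\<^sub>R ray i) = 0"
    using arg_cong[OF assms(1), of to_real_vec] by (simp add: to_real_vec_lincomb)
  then have "real_of_int (a i) = (\<Sum>l\<in>{0..CARD('n)}. real_of_int (a l)) / h * wt i"
    using assms(3) by (rule relation_rays_proportional)
  also have "\<dots> = real_of_int (t * int (wt i))"
    using h_pos by (simp flip: of_int_sum add: assms(2))
  finally show ?thesis
    by (simp only: of_int_eq_iff)
qed

lemma eq_if_relation_divisible:
  assumes "E > 0" "j < h" "j' < h"
    and "(\<Sum>i\<in>{0..CARD('n)}. a i *s \<rho> i) = 0"
    and "(\<Sum>i\<in>{0..CARD('n)}. a i) = int h * ((int j - int j') * int E)"
    and "\<And>i. i \<in> {0..CARD('n)} \<Longrightarrow> int (h * E) dvd a i"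
  shows "j = j'"
proof -
  have "int h dvd (int j - int j') * int (wt i)" if "i \<in> {0..CARD('n)}" for i
  proof -
    have "a i = (int j - int j') * int E * int (wt i)"
      using assms(4,5) that by (rule relation_eq_multiple_of_weights)
    then show ?thesis
      using assms(6)[OF that] assms(1) by (simp add: mult.commute mult.left_commute)
  qed
  then show ?thesis
    by (rule eq_if_weighted_difference_dvd[OF assms(2,3)])
qed

end

locale canonical_fake_wps = fake_wps \<rho> wt h
  for \<rho> :: "nat \<Rightarrow> int ^ 'n" and wt :: "nat \<Rightarrow> nat" and h :: nat +
  assumes canonical: "canonical_simplex \<rho>"
begin

lemma small_relation_trivial:
  assumes "E > 0"
    and rel: "int (h * E) *s y = (\<Sum>i\<in>{0..CARD('n)}. w i *s \<rho> i)"
    and sum_zero: "(\<Sum>i\<in>{0..CARD('n)}. w i) = 0"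
    and small: "\<And>i. i \<in> {1..CARD('n)} \<Longrightarrow> \<bar>w i\<bar> < int (E * wt i)"
  shows "y = 0 \<and> (\<forall>i\<in>{0..CARD('n)}. w i = 0)"
proof -
  \<comment> \<open>the sign is chosen so that the coefficient at the unconstrained index 0 is positive\<close>
  define s :: int where "s = (if w 0 \<ge> 0 then 1 else -1)"
  define v where "v i = int E * int (wt i) + s * w i" for i
  have "int (h * E) > 0"
    using h_pos assms(1) by simp
  moreover have "int (h * E) *s (s *s y) = (\<Sum>i\<in>{0..CARD('n)}. v i *s \<rho> i)"
    unfolding v_def sum_smult_add_distrib sum_smult_cmult weighted_relation rel[symmetric]
    by (simp add: vector_smult_assoc mult.commute)
  moreover have "v i > 0" if "i \<in> {0..CARD('n)}" for i
  proof (cases "i = 0")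
    case True
    have "int E * int (wt 0) > 0"
      using wt_pos[of 0] assms(1) by simp
    with True show ?thesis
      by (simp add: v_def s_def)
  next
    case False
    then have "\<bar>w i\<bar> < int (E * wt i)"
      using that small by simp
    then show ?thesis
      by (simp add: v_def s_def abs_less_iff)
  qed
  moreover have "(\<Sum>i\<in>{0..CARD('n)}. v i) = int (h * E)"
    using sum_zero by (simp add: v_def sum.distrib sum_distrib_left[symmetric] h_def)
  ultimately have "to_real_vec (s *s y) \<in> interior (assoc_simplex \<rho>)"
    by (rule interior_if_positive_coefficients)
  then have "s *s y = 0"
    using canonical unfolding canonical_simplex_def by blast
  then have "y = 0"
    by (simp add: s_def split: if_splits)
  have "(\<Sum>i\<in>{0..CARD('n)}. real_of_int (w i)) = 0"
    using sum_zero by (simp flip: of_int_sum)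
  moreover have "(\<Sum>i\<in>{0..CARD('n)}. real_of_int (w i) *\<^sub>R ray i) = 0"
    using arg_cong[OF rel, of to_real_vec] \<open>y = 0\<close> by (simp add: to_real_vec_lincomb)
  ultimately have "real_of_int (w i) = 0" if "i \<in> {0..CARD('n)}" for i
    using that by (rule affine_relation_rays_trivial)
  with \<open>y = 0\<close> show ?thesis
    by simp
qed

lemma congruent_relation_in_sublattice:
  assumes "E > 0"
    and rel: "int (h * E) *s x = (\<Sum>i\<in>{0..CARD('n)}. a i *s \<rho> i)"
    and sum_dvd: "int (h * E) dvd (\<Sum>i\<in>{0..CARD('n)}. a i)"
    and cong: "\<And>i. i \<in> {1..CARD('n)} \<Longrightarrow> int (h * E) dvd a i - c i"
    and small: "\<And>i. i \<in> {1..CARD('n)} \<Longrightarrow> \<bar>c i\<bar> < int (E * wt i)"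
  shows "(\<forall>i\<in>{1..CARD('n)}. c i = 0) \<and> x \<in> gen_sublattice \<rho> CARD('n)
    \<and> (\<forall>i\<in>{0..CARD('n)}. int (h * E) dvd a i)"
proof -
  let ?D = "int (h * E)"
  define w where "w i = (if i = 0 then - (\<Sum>l\<in>{1..CARD('n)}. c l) else c i)" for i
  have w_sum: "(\<Sum>i\<in>{0..CARD('n)}. w i) = 0"
    by (simp add: w_def sum.atLeast_Suc_atMost)
  have dvd: "?D dvd a i - w i" if "i \<in> {0..CARD('n)}" for i
  proof (cases "i = 0")
    case True
    then show ?thesis
      using dvd_first_plus_residues[OF sum_dvd cong] by (simp add: w_def)
  next
    case False
    then show ?thesis
      using cong that by (simp add: w_def)
  qed
  define z where "z i = (a i - w i) div ?D" for i
  have a_eq: "a i = w i + ?D * z i" if "i \<in> {0..CARD('n)}" for i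
    using dvd[OF that] unfolding z_def by simp
  have w_small: "\<bar>w i\<bar> < int (E * wt i)" if "i \<in> {1..CARD('n)}" for i
    using small[OF that] that by (simp add: w_def)
  define y where "y = x - (\<Sum>i\<in>{0..CARD('n)}. z i *s \<rho> i)"
  have "?D *s y = (\<Sum>i\<in>{0..CARD('n)}. (a i - ?D * z i) *s \<rho> i)"
    unfolding y_def sum_smult_diff_distrib sum_smult_cmult rel[symmetric]
    by (simp add: vector_ssub_ldistrib)
  also have "\<dots> = (\<Sum>i\<in>{0..CARD('n)}. w i *s \<rho> i)"
    using a_eq by (intro sum.cong) auto
  finally have "y = 0 \<and> (\<forall>i\<in>{0..CARD('n)}. w i = 0)"
    using small_relation_trivial[OF assms(1) _ w_sum w_small] by blast
  then have y_zero: "y = 0" and w_zero: "\<forall>i\<in>{0..CARD('n)}. w i = 0"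
    by simp_all
  have "c i = 0" if "i \<in> {1..CARD('n)}" for i
    using w_zero[rule_format, of i] that by (simp add: w_def)
  then have "\<forall>i\<in>{1..CARD('n)}. c i = 0"
    by blast
  moreover have "x = (\<Sum>i\<in>{0..CARD('n)}. z i *s \<rho> i)"
    using y_zero unfolding y_def by simp
  then have "x \<in> gen_sublattice \<rho> CARD('n)"
    by (simp add: gen_sublattice_lincomb_mem)
  moreover have "\<forall>i\<in>{0..CARD('n)}. ?D dvd a i"
    using a_eq w_zero by simp
  ultimately show ?thesis
    by blast
qed

lemma coset_code_inj:
  fixes rep :: "(int ^ 'n) set \<Rightarrow> int ^ 'n" and u :: "(int ^ 'n) set \<Rightarrow> nat \<Rightarrow> nat \<Rightarrow> int"
  assumes "E > 0"
    and rep: "\<And>C. C \<in> range (lattice_coset (gen_sublattice \<rho> CARD('n))) \<Longrightarrow>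
      lattice_coset (gen_sublattice \<rho> CARD('n)) (rep C) = C"
    and u_rel: "\<And>C j. int (h * E) *s rep C = (\<Sum>i\<in>{0..CARD('n)}. u C j i *s \<rho> i)"
    and u_sum: "\<And>C j. (\<Sum>i\<in>{0..CARD('n)}. u C j i) = int j * int (h * E)"
  shows "inj_on (\<lambda>(C, j, b). restrict (\<lambda>i. (u C j i + b i) mod int (h * E)) {1..CARD('n)})
    (range (lattice_coset (gen_sublattice \<rho> CARD('n))) \<times> {0..<h}
      \<times> (\<Pi>\<^sub>E i\<in>{1..CARD('n)}. {0..<int (E * wt i)}))"
    (is "inj_on ?code (?cosets \<times> {0..<h} \<times> ?box)")
proof (rule inj_onI)
  let ?L = "gen_sublattice \<rho> CARD('n)" and ?D = "int (h * E)"
  fix p q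
  assume "p \<in> ?cosets \<times> {0..<h} \<times> ?box" "q \<in> ?cosets \<times> {0..<h} \<times> ?box"
    and code_eq: "?code p = ?code q"
  then obtain C j b C' j' b' where pq: "p = (C, j, b)" "q = (C', j', b')"
    and mem: "C \<in> ?cosets" "C' \<in> ?cosets" "j < h" "j' < h" "b \<in> ?box" "b' \<in> ?box"
    by auto
  define a where "a i = u C j i - u C' j' i" for i
  have "?D *s (rep C - rep C') = (\<Sum>i\<in>{0..CARD('n)}. a i *s \<rho> i)"
    using u_rel[of C j] u_rel[of C' j'] unfolding a_def sum_smult_diff_distrib
    by (simp add: vector_ssub_ldistrib)
  moreover have a_sum: "(\<Sum>i\<in>{0..CARD('n)}. a i) = int h * ((int j - int j') * int E)"
    unfolding a_def sum_subtractf u_sum by (simp add: algebra_simps)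
  then have "?D dvd (\<Sum>i\<in>{0..CARD('n)}. a i)"
    by (simp add: mult.left_commute)
  moreover have "?D dvd a i - (b' i - b i)" if "i \<in> {1..CARD('n)}" for i
  proof -
    have "(u C j i + b i) mod ?D = (u C' j' i + b' i) mod ?D"
      using fun_cong[OF code_eq, of i] that by (simp add: pq)
    then show ?thesis
      unfolding a_def mod_eq_dvd_iff by (simp add: algebra_simps)
  qed
  moreover have "\<bar>b' i - b i\<bar> < int (E * wt i)" if "i \<in> {1..CARD('n)}" for i
  proof -
    have "b i \<in> {0..<int (E * wt i)}" "b' i \<in> {0..<int (E * wt i)}"
      using mem(5,6) that by (auto simp: PiE_iff)
    then show ?thesis
      by auto
  qed
  ultimately have "(\<forall>i\<in>{1..CARD('n)}. b' i - b i = 0) \<and> rep C - rep C' \<in> ?L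
      \<and> (\<forall>i\<in>{0..CARD('n)}. ?D dvd a i)"
    by (rule congruent_relation_in_sublattice[OF assms(1)])
  then have b_diff: "\<forall>i\<in>{1..CARD('n)}. b' i - b i = 0" and diff_mem: "rep C - rep C' \<in> ?L"
    and a_dvd: "\<forall>i\<in>{0..CARD('n)}. ?D dvd a i"
    by blast+
  have b_eq: "b = b'"
    using b_diff by (intro PiE_ext[OF mem(5,6)]) simp
  have "lattice_coset ?L (rep C) = lattice_coset ?L (rep C')"
    using diff_mem by (simp add: gen_sublattice_coset_eq_iff)
  then have C_eq: "C = C'"
    using rep[OF mem(1)] rep[OF mem(2)] by simp
  have "(\<Sum>i\<in>{0..CARD('n)}. a i *s \<rho> i) = 0"
    using \<open>?D *s (rep C - rep C') = _\<close> C_eq by simp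
  then have "j = j'"
    using a_sum a_dvd by (intro eq_if_relation_divisible[OF assms(1) mem(3,4)]) auto
  then show "p = q"
    using pq b_eq C_eq by simp
qed

lemma mult_simplex_bound_scaled:
  assumes "E > 0" and E_mem: "\<And>x. int E *s x \<in> gen_sublattice \<rho> CARD('n)"
  shows "mult_simplex \<rho> * (h * (\<Prod>i\<in>{1..CARD('n)}. wt i)) * E ^ CARD('n) \<le> (h * E) ^ CARD('n)"
proof -
  let ?L = "gen_sublattice \<rho> CARD('n)"
  let ?cosets = "range (lattice_coset ?L)"
  let ?box = "\<Pi>\<^sub>E i\<in>{1..CARD('n)}. {0..<int (E * wt i)}"
  let ?codes = "\<Pi>\<^sub>E i\<in>{1..CARD('n)}. {0..<int (h * E)}"
  define rep where "rep C = (SOME x. lattice_coset ?L x = C)" for C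
  have rep: "lattice_coset ?L (rep C) = C" if "C \<in> ?cosets" for C
    using that unfolding rep_def by (metis (mono_tags, lifting) someI_ex rangeE)
  define u where "u C j = (SOME u. int (h * E) *s rep C = (\<Sum>i\<in>{0..CARD('n)}. u i *s \<rho> i)
    \<and> (\<Sum>i\<in>{0..CARD('n)}. u i) = int j * int (h * E))" for C and j :: nat
  have u: "int (h * E) *s rep C = (\<Sum>i\<in>{0..CARD('n)}. u C j i *s \<rho> i)
    \<and> (\<Sum>i\<in>{0..CARD('n)}. u C j i) = int j * int (h * E)" for C j
    unfolding u_def by (rule someI_ex[OF scaled_coordinates_exist[OF E_mem]])
  let ?code = "\<lambda>(C, j, b). restrict (\<lambda>i. (u C j i + b i) mod int (h * E)) {1..CARD('n)}"
  have "inj_on ?code (?cosets \<times> {0..<h} \<times> ?box)"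
    using u by (intro coset_code_inj[OF assms(1) rep]) auto
  moreover have "?code ` (?cosets \<times> {0..<h} \<times> ?box) \<subseteq> ?codes"
    using h_pos assms(1) by (auto simp: PiE_iff)
  ultimately have "card (?cosets \<times> {0..<h} \<times> ?box) \<le> card ?codes"
    by (intro card_inj_on_le) (auto simp: finite_PiE)
  moreover have "card ?box = (\<Prod>i\<in>{1..CARD('n)}. wt i) * E ^ CARD('n)"
    by (simp add: card_PiE prod.distrib mult.commute del: of_nat_mult)
  moreover have "card ?codes = (h * E) ^ CARD('n)"
    by (simp add: card_PiE del: of_nat_mult)
  ultimately show ?thesis
    by (simp add: card_cartesian_product mult_simplex_def lattice_index_eq_card_cosets mult.assoc)
qed

lemma mult_simplex_bound:
  "mult_simplex \<rho> * (\<Prod>i\<in>{1..CARD('n)}. wt i) \<le> h ^ (CARD('n) - 1)"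
proof (cases "mult_simplex \<rho> = 0")
  \<comment> \<open>this case includes an infinite index, which \<open>card\<close> records as 0\<close>
  case True
  then show ?thesis
    by simp
next
  case False
  let ?P = "\<Prod>i\<in>{1..CARD('n)}. wt i" and ?E = "fact (mult_simplex \<rho>) :: nat"
  have "mult_simplex \<rho> * (h * ?P) * ?E ^ CARD('n) \<le> (h * ?E) ^ CARD('n)"
    using False unfolding mult_simplex_def
    by (intro mult_simplex_bound_scaled[unfolded mult_simplex_def] fact_index_smult_mem_gen_sublattice) auto
  then have "h * (mult_simplex \<rho> * ?P) \<le> h ^ CARD('n)"
    by (simp add: power_mult_distrib mult.assoc mult.left_commute)
  also have "\<dots> = h * h ^ (CARD('n) - 1)"
    by (simp add: power_eq_if)
  finally show ?thesis
    using h_pos by simp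
qed

end

theorem mainTheorem8:
  fixes \<rho> :: "nat \<Rightarrow> int ^ 'n" and wt :: "nat \<Rightarrow> nat"
  assumes "fake_wps_data \<rho> wt"
    and "canonical_simplex \<rho>"
  shows "real (mult_simplex \<rho>) \<le>
    (real (\<Sum>i\<in>{0..CARD('n)}. wt i)) ^ (CARD('n) - 1) / real (\<Prod>i\<in>{1..CARD('n)}. wt i)"
proof -
  interpret canonical_fake_wps \<rho> wt "\<Sum>i\<in>{0..CARD('n)}. wt i"
    using assms by unfold_locales simp_all
  have "real (mult_simplex \<rho>) * real (\<Prod>i\<in>{1..CARD('n)}. wt i)
      \<le> real (\<Sum>i\<in>{0..CARD('n)}. wt i) ^ (CARD('n) - 1)"
    using mult_simplex_bound by (metis of_nat_le_iff of_nat_mult of_nat_power)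
  moreover have "real (\<Prod>i\<in>{1..CARD('n)}. wt i) > 0"
    using wt_pos by (simp add: prod_pos del: of_nat_prod)
  ultimately show ?thesis
    by (simp only: pos_le_divide_eq)
qed

end
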